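(* Let $l,n$ be positive integers, $\mathbf{x}_1,\dots,\mathbf{x}_l\in\mathbb{R}^n$, $y_1,\dots,y_l\in\mathbb{R}$, $a_1,\dots,a_l,b_1,\dots,b_l\in\mathbb{R}$. Let $\varphi:\mathbb{R}\to[0,\infty)$ be nonconstant, continuous and sublinear, with $\varphi^*=\iota_{[\alpha,\beta]}$, $\alpha<\beta$. Let $\mathbf Z\in\mathbb{R}^{l\times n}$ have $i$-th row $a_i\mathbf x_i^T$, $\bar{\mathbf y}=(b_1y_1,\dots,b_ly_l)^T$, and for $C>0$ let $\theta^*(C)$ denote an optimal solution of the dual problem $$\min_{\theta\in[\alpha,\beta]^l}\ \tfrac{C}{2}\|\mathbf Z^T\theta\|^2-\langle\bar{\mathbf y},\theta\rangle.$$ Suppose $\theta^*(C_0)$ is given for some $C_0>0$, and let $C>C_0$. If for some index $i$ $$\tfrac{C+C_0}{2}\langle\mathbf Z^T\theta^*(C_0),a_i\mathbf x_i\rangle-\tfrac{C-C_0}{2}\|\mathbf Z^T\theta^*(C_0)\|\,\|a_i\mathbf x_i\|>b_iy_i,$$ then $[\theta^*(C)]_i=\alpha$, i.e., $i\in\mathcal R$. Similarly, if $$\tfrac{C+C_0}{2}\langle\mathbf Z^T\theta^*(C_0),a_i\mathbf x_i\rangle+\tfrac{C-C_0}{2}\|\mathbf Z^T\theta^*(C_0)\|\,\|a_i\mathbf x_i\|<b_iy_i,$$ then $[\theta^*(C)]_i=\beta$, i.e., $i\in\mathcal L$.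
   Context: This dual corresponds to the primal problem $\min_{\mathbf w\in\mathbb{R}^n}\frac12\|\mathbf w\|^2+C\sum_{i=1}^l\varphi(\mathbf w^T(a_i\mathbf x_i)+b_iy_i)$, whose unique optimal solution $\mathbf w^*(C)$ satisfies $\mathbf w^*(C)=-C\mathbf Z^T\theta^*(C)$. Sublinear means convex and $\varphi(tx)=t\varphi(x)$ for $t>0$; $\varphi^*(s)=\sup_t(st-\varphi(t))$ and $\iota_{[\alpha,\beta]}$ is $0$ on $[\alpha,\beta]$ and $+\infty$ elsewhere. The index sets are $\mathcal R=\{i:-\langle\mathbf w^*(C),a_i\mathbf x_i\rangle>b_iy_i\}$ and $\mathcal L=\{i:-\langle\mathbf w^*(C),a_i\mathbf x_i\rangle<b_iy_i\}$. *)

theory Defs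
  imports "HOL-Analysis.Analysis"
begin

text \<open>Data: index type 'l (l = CARD('l) samples), feature space real^'n.
  Vectors theta in R^l are represented as real^'l.\<close>

definition sublinear :: "(real \<Rightarrow> real) \<Rightarrow> bool" where
  "sublinear \<phi> \<longleftrightarrow> convex_on UNIV \<phi> \<and> (\<forall>t>0. \<forall>x. \<phi> (t * x) = t * \<phi> x)"

definition conj_fun :: "(real \<Rightarrow> real) \<Rightarrow> real \<Rightarrow> ereal" where
  "conj_fun \<phi> s = (SUP t. ereal (s * t - \<phi> t))"

definition indicator_interval :: "real \<Rightarrow> real \<Rightarrow> real \<Rightarrow> ereal" where
  "indicator_interval \<alpha> \<beta> s = (if \<alpha> \<le> s \<and> s \<le> \<beta> then 0 else \<infinity>)"

text \<open>Z^T theta, where the i-th row of Z is a_i x_i^T.\<close>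
definition ZT :: "('l::finite \<Rightarrow> real) \<Rightarrow> ('l \<Rightarrow> real^'n) \<Rightarrow> real^'l \<Rightarrow> real^'n" where
  "ZT a x \<theta> = (\<Sum>i\<in>UNIV. (\<theta> $ i) *\<^sub>R (a i *\<^sub>R x i))"

definition dual_obj :: "real \<Rightarrow> ('l::finite \<Rightarrow> real) \<Rightarrow> ('l \<Rightarrow> real) \<Rightarrow> ('l \<Rightarrow> real^'n)
    \<Rightarrow> ('l \<Rightarrow> real) \<Rightarrow> real^'l \<Rightarrow> real" where
  "dual_obj C a b x y \<theta> = C / 2 * (norm (ZT a x \<theta>))\<^sup>2 - (\<Sum>i\<in>UNIV. (b i * y i) * \<theta> $ i)"

definition box_set :: "real \<Rightarrow> real \<Rightarrow> (real^'l::finite) set" where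
  "box_set \<alpha> \<beta> = {\<theta>. \<forall>i. \<alpha> \<le> \<theta> $ i \<and> \<theta> $ i \<le> \<beta>}"

definition dual_optimal :: "real \<Rightarrow> real \<Rightarrow> real \<Rightarrow> ('l::finite \<Rightarrow> real) \<Rightarrow> ('l \<Rightarrow> real)
    \<Rightarrow> ('l \<Rightarrow> real^'n) \<Rightarrow> ('l \<Rightarrow> real) \<Rightarrow> real^'l \<Rightarrow> bool" where
  "dual_optimal \<alpha> \<beta> C a b x y \<theta> \<longleftrightarrow> \<theta> \<in> box_set \<alpha> \<beta> \<and>
     (\<forall>\<theta>'\<in>box_set \<alpha> \<beta>. dual_obj C a b x y \<theta> \<le> dual_obj C a b x y \<theta>')"

end

theory Submission
  imports Defs
begin

text \<open>Both optimality conditions are variational inequalities over the box. Adding the ones for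
  \<open>\<theta>\<^sup>*(C)\<close> and \<open>\<theta>\<^sup>*(C\<^sub>0)\<close> tested against each other confines \<open>C Z\<^sup>T\<theta>\<^sup>*(C)\<close> to the ball with
  centre \<open>(C+C\<^sub>0)/2 Z\<^sup>T\<theta>\<^sup>*(C\<^sub>0)\<close> and radius \<open>(C-C\<^sub>0)/2 \<parallel>Z\<^sup>T\<theta>\<^sup>*(C\<^sub>0)\<parallel>\<close>; Cauchy-Schwarz turns either
  hypothesis into the sign of \<open>C\<langle>Z\<^sup>T\<theta>\<^sup>*(C),a\<^sub>ix\<^sub>i\<rangle> - b\<^sub>iy\<^sub>i\<close>, the partial derivative of the dual
  objective in \<open>\<theta>\<^sub>i\<close>, and optimality in the \<open>i\<close>-th coordinate then pins \<open>\<theta>\<^sub>i\<close> to an endpoint.\<close>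

lemma ZT_add: "ZT a x (p + q) = ZT a x p + ZT a x q"
  unfolding ZT_def vector_add_component scaleR_add_left sum.distrib ..

lemma ZT_diff: "ZT a x (p - q) = ZT a x p - ZT a x q"
  unfolding ZT_def vector_minus_component scaleR_diff_left sum_subtractf ..

lemma ZT_scaleR: "ZT a x (c *\<^sub>R p) = c *\<^sub>R ZT a x p"
  by (simp add: ZT_def scaleR_sum_right mult.assoc)

lemma ZT_axis: "ZT a x (axis i 1) = a i *\<^sub>R x i"
proof -
  have "(\<lambda>j. (axis i 1 $ j * a j) *\<^sub>R x j) = (\<lambda>j. if j = i then a i *\<^sub>R x i else 0)"
    by (auto simp: axis_def)
  then show ?thesis
    unfolding ZT_def scaleR_scaleR by (simp only:) simp
qed

lemma sum_mult_scaleR_axis: "(\<Sum>j\<in>UNIV. (c j :: real) * (s *\<^sub>R axis i 1) $ j) = s * c i"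
  by (simp add: axis_def if_distrib cong: if_cong)

lemma convex_box_set: "convex (box_set \<alpha> \<beta> :: (real^'l::finite) set)"
proof -
  have "box_set \<alpha> \<beta> = cbox (vec \<alpha>) (vec \<beta> :: real^'l)"
    by (auto simp: box_set_def mem_box_cart)
  then show ?thesis
    by (simp add: convex_box)
qed

lemma box_set_update_component:
  assumes "\<theta> \<in> box_set \<alpha> \<beta>" "\<alpha> \<le> s" "s \<le> \<beta>"
  shows "\<theta> + (s - \<theta> $ i) *\<^sub>R axis i 1 \<in> box_set \<alpha> \<beta>"
  using assms by (auto simp: box_set_def axis_def)

lemma nonneg_if_nonneg_on_small_scales:
  fixes L Q :: real
  assumes "Q \<ge> 0" and "\<And>t. 0 < t \<Longrightarrow> t \<le> 1 \<Longrightarrow> t * L + t\<^sup>2 * Q \<ge> 0"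
  shows "L \<ge> 0"
proof (rule ccontr)
  assume "\<not> L \<ge> 0"
  define t where "t = min 1 (- L / (Q + 1))"
  have t: "0 < t" "t \<le> 1"
    using \<open>\<not> L \<ge> 0\<close> \<open>Q \<ge> 0\<close> by (auto simp: t_def divide_neg_pos)
  have "t * Q \<le> (- L / (Q + 1)) * Q"
    using \<open>Q \<ge> 0\<close> by (intro mult_right_mono) (simp_all add: t_def)
  also have "\<dots> < - L"
    using \<open>\<not> L \<ge> 0\<close> \<open>Q \<ge> 0\<close> by (simp add: field_simps)
  finally have "t * (L + t * Q) < 0"
    using t by (simp add: mult_pos_neg)
  then have "t * L + t\<^sup>2 * Q < 0"
    by (simp add: algebra_simps power2_eq_square)
  with assms(2) t show False
    by force
qed

lemma dual_obj_add_scaleR: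
  "dual_obj C a b x y (\<theta> + t *\<^sub>R d) = dual_obj C a b x y \<theta>
     + t * (C * (ZT a x \<theta> \<bullet> ZT a x d) - (\<Sum>i\<in>UNIV. (b i * y i) * d $ i))
     + t\<^sup>2 * (C / 2 * (norm (ZT a x d))\<^sup>2)"
proof -
  have "(norm (ZT a x \<theta> + t *\<^sub>R ZT a x d))\<^sup>2 = (norm (ZT a x \<theta>))\<^sup>2
      + 2 * t * (ZT a x \<theta> \<bullet> ZT a x d) + t\<^sup>2 * (norm (ZT a x d))\<^sup>2"
    unfolding power2_norm_eq_inner
    by (simp add: inner_add_left inner_add_right inner_commute power2_eq_square algebra_simps)
  moreover have "(\<Sum>i\<in>UNIV. (b i * y i) * (\<theta> + t *\<^sub>R d) $ i) =
      (\<Sum>i\<in>UNIV. (b i * y i) * \<theta> $ i) + t * (\<Sum>i\<in>UNIV. (b i * y i) * d $ i)"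
    by (simp add: algebra_simps sum.distrib sum_distrib_left)
  ultimately show ?thesis
    unfolding dual_obj_def ZT_add ZT_scaleR by (simp add: algebra_simps power2_eq_square)
qed

lemma dual_optimal_variational_ineq:
  assumes opt: "dual_optimal \<alpha> \<beta> C a b x y \<theta>" and "\<theta>' \<in> box_set \<alpha> \<beta>" and "C \<ge> 0"
  shows "C * (ZT a x \<theta> \<bullet> ZT a x (\<theta>' - \<theta>)) - (\<Sum>i\<in>UNIV. (b i * y i) * (\<theta>' - \<theta>) $ i) \<ge> 0"
proof (rule nonneg_if_nonneg_on_small_scales)
  show "C / 2 * (norm (ZT a x (\<theta>' - \<theta>)))\<^sup>2 \<ge> 0"
    using \<open>C \<ge> 0\<close> by simp
next
  fix t :: real
  assume "0 < t" "t \<le> 1"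
  have "\<theta> \<in> box_set \<alpha> \<beta>"
    using opt by (simp add: dual_optimal_def)
  then have "(1 - t) *\<^sub>R \<theta> + t *\<^sub>R \<theta>' \<in> box_set \<alpha> \<beta>"
    using \<open>\<theta>' \<in> box_set \<alpha> \<beta>\<close> \<open>0 < t\<close> \<open>t \<le> 1\<close>
    by (intro convexD[OF convex_box_set]) simp_all
  moreover have "(1 - t) *\<^sub>R \<theta> + t *\<^sub>R \<theta>' = \<theta> + t *\<^sub>R (\<theta>' - \<theta>)"
    by (simp add: algebra_simps)
  ultimately have "dual_obj C a b x y \<theta> \<le> dual_obj C a b x y (\<theta> + t *\<^sub>R (\<theta>' - \<theta>))"
    using opt by (simp add: dual_optimal_def)
  then show "t * (C * (ZT a x \<theta> \<bullet> ZT a x (\<theta>' - \<theta>)) - (\<Sum>i\<in>UNIV. (b i * y i) * (\<theta>' - \<theta>) $ i))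
      + t\<^sup>2 * (C / 2 * (norm (ZT a x (\<theta>' - \<theta>)))\<^sup>2) \<ge> 0"
    unfolding dual_obj_add_scaleR by simp
qed

lemma dual_optimal_coordinate_ineq:
  fixes \<theta> :: "real^'l::finite"
  assumes opt: "dual_optimal \<alpha> \<beta> C a b x y \<theta>" and "C \<ge> 0" and "\<alpha> \<le> s" "s \<le> \<beta>"
  shows "(s - \<theta> $ i) * (C * (ZT a x \<theta> \<bullet> (a i *\<^sub>R x i)) - b i * y i) \<ge> 0"
proof -
  define d :: "real^'l" where "d = (s - \<theta> $ i) *\<^sub>R axis i 1"
  have "\<theta> \<in> box_set \<alpha> \<beta>"
    using opt by (simp add: dual_optimal_def)
  from dual_optimal_variational_ineq[OF opt box_set_update_component[OF this assms(3,4)] \<open>C \<ge> 0\<close>]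
  have "C * (ZT a x \<theta> \<bullet> ZT a x d) - (\<Sum>j\<in>UNIV. (b j * y j) * d $ j) \<ge> 0"
    by (simp add: d_def)
  then show ?thesis
    unfolding d_def ZT_scaleR ZT_axis sum_mult_scaleR_axis by (simp add: algebra_simps)
qed

lemma dual_optimal_component_eq_lower:
  assumes "dual_optimal \<alpha> \<beta> C a b x y \<theta>" "C \<ge> 0"
    and "C * (ZT a x \<theta> \<bullet> (a i *\<^sub>R x i)) > b i * y i"
  shows "\<theta> $ i = \<alpha>"
proof -
  have "\<alpha> \<le> \<theta> $ i" "\<theta> $ i \<le> \<beta>"
    using assms(1) by (auto simp: dual_optimal_def box_set_def)
  moreover have "(\<alpha> - \<theta> $ i) * (C * (ZT a x \<theta> \<bullet> (a i *\<^sub>R x i)) - b i * y i) \<ge> 0"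
    using dual_optimal_coordinate_ineq[OF assms(1,2)] calculation by simp
  ultimately show ?thesis
    using assms(3) by (simp add: zero_le_mult_iff)
qed

lemma dual_optimal_component_eq_upper:
  assumes "dual_optimal \<alpha> \<beta> C a b x y \<theta>" "C \<ge> 0"
    and "C * (ZT a x \<theta> \<bullet> (a i *\<^sub>R x i)) < b i * y i"
  shows "\<theta> $ i = \<beta>"
proof -
  have "\<alpha> \<le> \<theta> $ i" "\<theta> $ i \<le> \<beta>"
    using assms(1) by (auto simp: dual_optimal_def box_set_def)
  moreover have "(\<beta> - \<theta> $ i) * (C * (ZT a x \<theta> \<bullet> (a i *\<^sub>R x i)) - b i * y i) \<ge> 0"
    using dual_optimal_coordinate_ineq[OF assms(1,2)] calculation by simp
  ultimately show ?thesis
    using assms(3) by (simp add: zero_le_mult_iff)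
qed

text \<open>The ball estimate: \<open>\<parallel>C v - (C+C\<^sub>0)/2 u\<parallel>\<^sup>2 - ((C-C\<^sub>0)/2)\<^sup>2\<parallel>u\<parallel>\<^sup>2\<close> equals \<open>C\<close> times the
  negative of the given monotonicity expression.\<close>

lemma norm_diff_midpoint_le:
  fixes u v :: "'a::real_inner"
  assumes "0 \<le> C0" "C0 \<le> C" and mono: "C * (v \<bullet> (u - v)) + C0 * (u \<bullet> (v - u)) \<ge> 0"
  shows "norm (C *\<^sub>R v - ((C + C0) / 2) *\<^sub>R u) \<le> (C - C0) / 2 * norm u"
proof -
  have "(norm (C *\<^sub>R v - ((C + C0) / 2) *\<^sub>R u))\<^sup>2 - ((C - C0) / 2 * norm u)\<^sup>2
      = - C * (C * (v \<bullet> (u - v)) + C0 * (u \<bullet> (v - u)))"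
    unfolding power2_norm_eq_inner power_mult_distrib
    by (simp add: inner_diff_left inner_diff_right inner_commute power2_eq_square field_simps)
  also have "\<dots> \<le> 0"
    using assms by (simp add: mult_nonneg_nonneg)
  finally show ?thesis
    using assms(2) by (simp add: power2_le_iff_abs_le)
qed

lemma inner_bounds_of_norm_diff_le:
  fixes v c z :: "'a::real_inner"
  assumes "norm (v - c) \<le> r"
  shows "c \<bullet> z - r * norm z \<le> v \<bullet> z" "v \<bullet> z \<le> c \<bullet> z + r * norm z"
proof -
  have "\<bar>(v - c) \<bullet> z\<bar> \<le> r * norm z"
    using Cauchy_Schwarz_ineq2[of "v - c" z] assms
    by (meson mult_right_mono norm_ge_zero order_trans)
  then show "c \<bullet> z - r * norm z \<le> v \<bullet> z" "v \<bullet> z \<le> c \<bullet> z + r * norm z"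
    by (auto simp: inner_diff_left abs_le_iff)
qed

lemma dual_optimal_ball:
  assumes opt0: "dual_optimal \<alpha> \<beta> C0 a b x y \<theta>0" and optC: "dual_optimal \<alpha> \<beta> C a b x y \<theta>C"
    and "0 \<le> C0" "C0 \<le> C"
  shows "norm (C *\<^sub>R ZT a x \<theta>C - ((C + C0) / 2) *\<^sub>R ZT a x \<theta>0) \<le> (C - C0) / 2 * norm (ZT a x \<theta>0)"
proof (rule norm_diff_midpoint_le[OF assms(3,4)])
  have "\<theta>0 \<in> box_set \<alpha> \<beta>" "\<theta>C \<in> box_set \<alpha> \<beta>"
    using opt0 optC by (auto simp: dual_optimal_def)
  moreover have "(\<Sum>j\<in>UNIV. (b j * y j) * (\<theta>0 - \<theta>C) $ j) = - (\<Sum>j\<in>UNIV. (b j * y j) * (\<theta>C - \<theta>0) $ j)"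
    by (simp add: algebra_simps sum_negf[symmetric])
  ultimately show "C * (ZT a x \<theta>C \<bullet> (ZT a x \<theta>0 - ZT a x \<theta>C))
      + C0 * (ZT a x \<theta>0 \<bullet> (ZT a x \<theta>C - ZT a x \<theta>0)) \<ge> 0"
    using dual_optimal_variational_ineq[OF optC, of \<theta>0] dual_optimal_variational_ineq[OF opt0, of \<theta>C]
      assms(3,4) by (simp add: ZT_diff)
qed

theorem theorem3:
  fixes x :: "'l::finite \<Rightarrow> real^'n"
    and y a b :: "'l \<Rightarrow> real"
    and \<phi> :: "real \<Rightarrow> real"
    and \<alpha> \<beta> C0 C :: real
    and \<theta>0 \<theta>C :: "real^'l"
    and i :: 'l
  assumes phi_nonneg: "\<forall>t. \<phi> t \<ge> 0"
    and phi_nonconst: "\<exists>s t. \<phi> s \<noteq> \<phi> t"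
    and phi_cont: "continuous_on UNIV \<phi>"
    and phi_sublin: "sublinear \<phi>"
    and phi_conj: "\<forall>s. conj_fun \<phi> s = indicator_interval \<alpha> \<beta> s"
    and ab: "\<alpha> < \<beta>"
    and C0pos: "C0 > 0"
    and CC0: "C > C0"
    and opt0: "dual_optimal \<alpha> \<beta> C0 a b x y \<theta>0"
    and optC: "dual_optimal \<alpha> \<beta> C a b x y \<theta>C"
  shows "((C + C0) / 2 * (ZT a x \<theta>0 \<bullet> (a i *\<^sub>R x i))
            - (C - C0) / 2 * norm (ZT a x \<theta>0) * norm (a i *\<^sub>R x i) > b i * y i
          \<longrightarrow> \<theta>C $ i = \<alpha> \<and> - ((- C *\<^sub>R ZT a x \<theta>C) \<bullet> (a i *\<^sub>R x i)) > b i * y i)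
       \<and> ((C + C0) / 2 * (ZT a x \<theta>0 \<bullet> (a i *\<^sub>R x i))
            + (C - C0) / 2 * norm (ZT a x \<theta>0) * norm (a i *\<^sub>R x i) < b i * y i
          \<longrightarrow> \<theta>C $ i = \<beta> \<and> - ((- C *\<^sub>R ZT a x \<theta>C) \<bullet> (a i *\<^sub>R x i)) < b i * y i)"
proof -
  have "0 \<le> C0" "C0 \<le> C" "C \<ge> 0"
    using C0pos CC0 by simp_all
  note bounds = inner_bounds_of_norm_diff_le[OF dual_optimal_ball[OF opt0 optC \<open>0 \<le> C0\<close> \<open>C0 \<le> C\<close>],
      of "a i *\<^sub>R x i"]
  have lower: "(C + C0) / 2 * (ZT a x \<theta>0 \<bullet> (a i *\<^sub>R x i))
      - (C - C0) / 2 * norm (ZT a x \<theta>0) * norm (a i *\<^sub>R x i) \<le> C * (ZT a x \<theta>C \<bullet> (a i *\<^sub>R x i))"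
   and upper: "C * (ZT a x \<theta>C \<bullet> (a i *\<^sub>R x i)) \<le> (C + C0) / 2 * (ZT a x \<theta>0 \<bullet> (a i *\<^sub>R x i))
      + (C - C0) / 2 * norm (ZT a x \<theta>0) * norm (a i *\<^sub>R x i)"
    using bounds by (simp_all only: inner_scaleR_left mult.assoc)
  have "- ((- C *\<^sub>R ZT a x \<theta>C) \<bullet> (a i *\<^sub>R x i)) = C * (ZT a x \<theta>C \<bullet> (a i *\<^sub>R x i))"
    by simp
  then show ?thesis
    using lower upper dual_optimal_component_eq_lower[OF optC \<open>C \<ge> 0\<close>, of i]
      dual_optimal_component_eq_upper[OF optC \<open>C \<ge> 0\<close>, of i]
    by (simp only:) linarith
qed

end
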